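(* For all integers $q\ge1$ and $n\ge1$, the number of nonattacking placements of $q$ unlabelled semibishops on the $n\times n$ square board is $$u_{\mathsf Q^{01}}(q;n)=(-1)^q\sum_{k=0}^q s(n+1,n+1-k)\,s(n,n-(q-k)),$$ which is a polynomial function of $n$ of degree $2q$.
   Context: The semibishop $\mathsf Q^{01}$ is the rider with the single basic move $(1,1)$: two pieces at positions $z,z'\in[n]^2=\{1,\dots,n\}^2$ attack each other if $z'-z$ is an integer multiple of $(1,1)$ (including $z=z'$). $u_{\mathsf Q^{01}}(q;n)$ counts the sets of $q$ positions in $[n]^2$ no two of which attack each other. $s(a,b)$ denotes the signed Stirling number of the first kind, taken to be $0$ if $b<0$ or $b>a$. *)

theory Defs
  imports "HOL-Combinatorics.Stirling" "HOL-Computational_Algebra.Polynomial"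
begin

definition signed_stirling1 :: "int \<Rightarrow> int \<Rightarrow> int" where
  "signed_stirling1 a b =
     (if b < 0 \<or> b > a then 0
      else (-1) ^ nat (a - b) * int (stirling (nat a) (nat b)))"

definition board :: "nat \<Rightarrow> (int \<times> int) set" where
  "board n = {1..int n} \<times> {1..int n}"

definition semibishop_attacks :: "int \<times> int \<Rightarrow> int \<times> int \<Rightarrow> bool" where
  "semibishop_attacks z z' \<longleftrightarrow> (\<exists>m::int. fst z' - fst z = m * 1 \<and> snd z' - snd z = m * 1)"

definition u_semibishop :: "nat \<Rightarrow> nat \<Rightarrow> nat" where
  "u_semibishop q n = card {S. S \<subseteq> board n \<and> card S = q \<and>
      (\<forall>z\<in>S. \<forall>z'\<in>S. z \<noteq> z' \<longrightarrow> \<not> semibishop_attacks z z')}"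

end

(*
  Two semibishops attack each other exactly when they lie on the same diagonal x - y = d, so
  nonattacking placements of q pieces choose q distinct diagonals and one cell on each. The
  diagonal with offset d has n - |d| cells, hence the count is the coefficient of t^q in
  (1 + t)(1 + 2t)...(1 + nt) * (1 + t)...(1 + (n-1)t), whose factors are generating polynomials of
  Stirling numbers of the first kind. The coefficient of t^j in the product of (1 + it), i < m,
  satisfies c_{j+1}(m) = sum_{i<m} i c_j(i); since discrete summation raises the degree of a
  polynomial in m by one, c_j is a polynomial of degree 2j with positive leading coefficient, and
  the convolution is therefore a polynomial of degree 2q.
*)
theory Submission
  imports Defs "HOL-Library.Disjoint_Sets"
begin

section \<open>Discrete summation of polynomials\<close>

definition succ_power_diff :: "nat \<Rightarrow> 'a::comm_ring_1 poly" where
  "succ_power_diff d = [:1, 1:] ^ Suc d - monom 1 (Suc d)"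

lemma poly_succ_power_diff: "poly (succ_power_diff d) x = (x + 1) ^ Suc d - x ^ Suc d"
  by (simp add: succ_power_diff_def poly_monom poly_power add.commute del: power_Suc)

lemma coeff_succ_power_diff:
  "coeff (succ_power_diff d :: 'a::comm_ring_1 poly) k = (if k \<le> d then of_nat (Suc d choose k) else 0)"
proof -
  consider "k \<le> d" | "k = Suc d" | "k > Suc d" by linarith
  then show ?thesis
  proof cases
    case 3
    then have "coeff ([:1, 1:] ^ Suc d :: 'a poly) k = 0"
      by (intro coeff_eq_0 le_less_trans[OF degree_power_le]) simp
    with 3 show ?thesis by (simp add: succ_power_diff_def coeff_monom del: power_Suc)
  qed (simp_all add: succ_power_diff_def coeff_linear_poly_power coeff_monom del: power_Suc)
qed

lemma degree_succ_power_diff: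
  "degree (succ_power_diff d :: 'a::{comm_ring_1, ring_char_0} poly) = d"
proof -
  have "degree (succ_power_diff d :: 'a poly) \<le> d"
    by (rule degree_le) (auto simp: coeff_succ_power_diff)
  moreover have "coeff (succ_power_diff d :: 'a poly) d \<noteq> 0"
    by (simp add: coeff_succ_power_diff del: of_nat_Suc)
  ultimately show ?thesis
    by (meson antisym le_degree)
qed

lemma partial_sums_succ_power_diff:
  "(\<Sum>m<n. poly (succ_power_diff d) (of_nat m :: 'a::comm_ring_1)) = of_nat n ^ Suc d"
  using sum_lessThan_telescope[of "\<lambda>m. (of_nat m :: 'a) ^ Suc d" n]
  by (simp add: poly_succ_power_diff add.commute)

lemma exists_poly_partial_sums:
  fixes Q :: "'a::field_char_0 poly"
  assumes "Q \<noteq> 0"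
  shows "\<exists>R. degree R = Suc (degree Q) \<and> lead_coeff R = lead_coeff Q / of_nat (Suc (degree Q))
           \<and> (\<forall>n. poly R (of_nat n) = (\<Sum>m<n. poly Q (of_nat m)))"
  using assms
proof (induction "degree Q" arbitrary: Q rule: less_induct)
  case less
  define d where "d = degree Q"
  define a where "a = lead_coeff Q / of_nat (Suc d)"
  define Q' where "Q' = Q - smult a (succ_power_diff d)"
  have "a \<noteq> 0" using less.prems by (simp add: a_def del: of_nat_Suc)
  have "coeff Q' d = 0"
    by (simp add: Q'_def a_def d_def coeff_succ_power_diff del: of_nat_Suc)
  moreover have "degree Q' \<le> d"
    unfolding Q'_def d_def
    by (metis degree_diff_le degree_smult_le degree_succ_power_diff le_refl order.trans)
  \<comment> \<open>\<open>Q'\<close> loses the top term of \<open>Q\<close>, while the partial sums of the subtracted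
    multiple of \<open>(x + 1)^(d+1) - x^(d+1)\<close> telescope to \<open>a n^(d+1)\<close>\<close>
  ultimately consider "Q' = 0" | "Q' \<noteq> 0" "degree Q' < d"
    by (metis leading_coeff_0_iff le_neq_implies_less)
  then obtain R' where R': "degree R' \<le> d" "\<forall>n. poly R' (of_nat n) = (\<Sum>m<n. poly Q' (of_nat m))"
  proof cases
    case 1
    then show thesis by (intro that[of 0]) auto
  next
    case 2
    then obtain R'' where "degree R'' = Suc (degree Q')"
        "\<forall>n. poly R'' (of_nat n) = (\<Sum>m<n. poly Q' (of_nat m))"
      using less.hyps[of Q'] d_def by blast
    with 2 show thesis by (intro that[of R'']) auto
  qed
  define R where "R = monom a (Suc d) + R'"
  have "degree R = Suc (degree Q)"
    using R'(1) \<open>a \<noteq> 0\<close> by (simp add: R_def d_def degree_add_eq_left degree_monom_eq)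
  moreover have "lead_coeff R = lead_coeff Q / of_nat (Suc (degree Q))"
    using R'(1) \<open>degree R = Suc (degree Q)\<close> by (simp add: R_def a_def d_def coeff_eq_0)
  moreover have "poly R (of_nat n) = (\<Sum>m<n. poly Q (of_nat m))" for n
  proof -
    have "poly R (of_nat n) = a * of_nat n ^ Suc d + (\<Sum>m<n. poly Q' (of_nat m))"
      by (simp add: R_def R'(2) poly_monom)
    also have "\<dots> = a * (\<Sum>m<n. poly (succ_power_diff d) (of_nat m)) + (\<Sum>m<n. poly Q' (of_nat m))"
      by (simp only: partial_sums_succ_power_diff)
    also have "\<dots> = (\<Sum>m<n. poly Q (of_nat m))"
      by (simp add: Q'_def sum_distrib_left flip: sum.distrib)
    finally show ?thesis .
  qed
  ultimately show ?case by (intro exI[of _ R]) simp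
qed

section \<open>Polynomial functions on the naturals\<close>

text \<open>The leading coefficient is required to be positive so that adding functions of the
  same degree cannot cancel the top term.\<close>
definition poly_fun :: "nat \<Rightarrow> (nat \<Rightarrow> nat) \<Rightarrow> bool" where
  "poly_fun d f \<longleftrightarrow>
     (\<exists>p::rat poly. degree p = d \<and> lead_coeff p > 0 \<and> (\<forall>n. of_nat (f n) = poly p (of_nat n)))"

lemma poly_fun_const: "c > 0 \<Longrightarrow> poly_fun 0 (\<lambda>_. c)"
  unfolding poly_fun_def by (intro exI[of _ "[:of_nat c:]"]) simp

lemma poly_fun_id: "poly_fun 1 (\<lambda>n. n)"
  unfolding poly_fun_def by (intro exI[of _ "[:0, 1:]"]) simp

lemma poly_fun_mult:
  assumes "poly_fun a f" "poly_fun b g"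
  shows "poly_fun (a + b) (\<lambda>n. f n * g n)"
proof -
  obtain p :: "rat poly" where p: "degree p = a" "lead_coeff p > 0" "\<forall>n. of_nat (f n) = poly p (of_nat n)"
    using assms(1) unfolding poly_fun_def by blast
  obtain q :: "rat poly" where q: "degree q = b" "lead_coeff q > 0" "\<forall>n. of_nat (g n) = poly q (of_nat n)"
    using assms(2) unfolding poly_fun_def by blast
  have "p \<noteq> 0" "q \<noteq> 0" using p(2) q(2) by auto
  then have "degree (p * q) = a + b" using p(1) q(1) by (simp add: degree_mult_eq)
  moreover have "lead_coeff (p * q) > 0"
    unfolding lead_coeff_mult using p(2) q(2) by (rule mult_pos_pos)
  ultimately show ?thesis
    unfolding poly_fun_def using p(3) q(3) by (intro exI[of _ "p * q"]) simp
qed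

lemma poly_fun_add:
  assumes "poly_fun d f" "poly_fun d g"
  shows "poly_fun d (\<lambda>n. f n + g n)"
proof -
  obtain p :: "rat poly" where p: "degree p = d" "lead_coeff p > 0" "\<forall>n. of_nat (f n) = poly p (of_nat n)"
    using assms(1) unfolding poly_fun_def by blast
  obtain q :: "rat poly" where q: "degree q = d" "lead_coeff q > 0" "\<forall>n. of_nat (g n) = poly q (of_nat n)"
    using assms(2) unfolding poly_fun_def by blast
  have top: "coeff (p + q) d = lead_coeff p + lead_coeff q"
    using p(1) q(1) by simp
  then have "degree (p + q) = d"
    using p q by (metis add_pos_pos antisym degree_add_le le_degree less_irrefl)
  with top show ?thesis
    unfolding poly_fun_def using p q by (intro exI[of _ "p + q"]) simp
qed

lemma poly_fun_sum:
  "finite I \<Longrightarrow> I \<noteq> {} \<Longrightarrow> (\<And>i. i \<in> I \<Longrightarrow> poly_fun d (f i)) \<Longrightarrow> poly_fun d (\<lambda>n. \<Sum>i\<in>I. f i n)"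
  by (induction I rule: finite_ne_induct) (simp_all add: poly_fun_add)

lemma poly_fun_shift:
  assumes "poly_fun d f"
  shows "poly_fun d (\<lambda>n. f (Suc n))"
proof -
  obtain p :: "rat poly" where p: "degree p = d" "lead_coeff p > 0" "\<forall>n. of_nat (f n) = poly p (of_nat n)"
    using assms unfolding poly_fun_def by blast
  have "lead_coeff (pcompose p [:1, 1:]) = lead_coeff p"
    using lead_coeff_comp[of "[:1, 1:]" p] by simp
  then show ?thesis
    unfolding poly_fun_def using p
    by (intro exI[of _ "pcompose p [:1, 1:]"]) (simp add: degree_pcompose poly_pcompose add.commute)
qed

lemma poly_fun_partial_sums:
  assumes "poly_fun d f"
  shows "poly_fun (Suc d) (\<lambda>n. \<Sum>m<n. f m)"
proof -
  obtain p :: "rat poly" where p: "degree p = d" "lead_coeff p > 0" "\<forall>n. of_nat (f n) = poly p (of_nat n)"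
    using assms unfolding poly_fun_def by blast
  then have "p \<noteq> 0" by auto
  then obtain R where "degree R = Suc (degree p)" "lead_coeff R = lead_coeff p / of_nat (Suc (degree p))"
      "\<forall>n. poly R (of_nat n) = (\<Sum>m<n. poly p (of_nat m))"
    using exists_poly_partial_sums by blast
  then show ?thesis
    unfolding poly_fun_def using p by (intro exI[of _ R]) (simp add: of_nat_sum)
qed

section \<open>Generating polynomials of Stirling numbers\<close>

definition stirling_poly :: "nat \<Rightarrow> nat poly" where
  "stirling_poly m = (\<Prod>i<m. [:1, i:])"

lemma stirling_poly_Suc: "stirling_poly (Suc m) = [:1, m:] * stirling_poly m"
  by (simp add: stirling_poly_def)

lemma coeff_stirling_poly_0: "coeff (stirling_poly m) 0 = 1"
  by (induction m) (simp_all add: stirling_poly_Suc, simp add: stirling_poly_def)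

lemma coeff_stirling_poly_Suc_Suc:
  "coeff (stirling_poly (Suc m)) (Suc j) = coeff (stirling_poly m) (Suc j) + m * coeff (stirling_poly m) j"
  by (simp add: stirling_poly_Suc)

lemma coeff_stirling_poly_Suc_eq_sum:
  "coeff (stirling_poly n) (Suc j) = (\<Sum>m<n. m * coeff (stirling_poly m) j)"
  by (induction n) (simp_all add: coeff_stirling_poly_Suc_Suc, simp add: stirling_poly_def)

lemma degree_stirling_poly_le: "degree (stirling_poly m) \<le> m"
proof -
  have "degree (stirling_poly m) \<le> sum (degree \<circ> (\<lambda>i. [:1, i:])) {..<m}"
    unfolding stirling_poly_def by (rule degree_prod_sum_le) simp
  also have "\<dots> \<le> (\<Sum>i<m. 1)" by (rule sum_mono) simp
  finally show ?thesis by simp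
qed

lemma coeff_stirling_poly: "j \<le> m \<Longrightarrow> coeff (stirling_poly m) j = stirling m (m - j)"
proof (induction m arbitrary: j)
  case 0
  then show ?case by (simp add: coeff_stirling_poly_0)
next
  case (Suc m)
  show ?case
  proof (cases j)
    case 0
    then show ?thesis by (simp add: coeff_stirling_poly_0)
  next
    case (Suc i)
    show ?thesis
    proof (cases "i < m")
      case True
      then have "m - i = Suc (m - Suc i)" by simp
      then show ?thesis using True \<open>j = Suc i\<close> by (simp add: coeff_stirling_poly_Suc_Suc Suc.IH)
    next
      case False
      with Suc.prems \<open>j = Suc i\<close> have "i = m" by simp
      moreover have "coeff (stirling_poly m) (Suc m) = 0"
        using degree_stirling_poly_le[of m] by (simp add: coeff_eq_0)
      moreover have "m * stirling m 0 = 0" by (cases m) simp_all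
      ultimately show ?thesis using \<open>j = Suc i\<close> by (simp add: coeff_stirling_poly_Suc_Suc Suc.IH)
    qed
  qed
qed

lemma poly_fun_coeff_stirling_poly: "poly_fun (2 * j) (\<lambda>n. coeff (stirling_poly n) j)"
proof (induction j)
  case 0
  then show ?case by (simp add: coeff_stirling_poly_0 poly_fun_const)
next
  case (Suc j)
  have "poly_fun (Suc (2 * j)) (\<lambda>n. n * coeff (stirling_poly n) j)"
    using poly_fun_mult[OF poly_fun_id Suc] by simp
  then have "poly_fun (Suc (Suc (2 * j))) (\<lambda>n. \<Sum>m<n. m * coeff (stirling_poly m) j)"
    by (rule poly_fun_partial_sums)
  then show ?case by (simp add: coeff_stirling_poly_Suc_eq_sum)
qed

lemma signed_stirling1_eq_coeff_stirling_poly: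
  "signed_stirling1 (int m) (int m - int j) = (-1) ^ j * int (coeff (stirling_poly m) j)"
proof (cases "j \<le> m")
  case True
  then have "nat (int m - int j) = m - j" "nat (int j) = j" by simp_all
  with True show ?thesis by (simp add: signed_stirling1_def coeff_stirling_poly)
next
  case False
  then have "coeff (stirling_poly m) j = 0"
    using degree_stirling_poly_le[of m] by (simp add: coeff_eq_0)
  with False show ?thesis by (simp add: signed_stirling1_def)
qed

section \<open>Partial transversals\<close>

definition partial_transversals :: "('i \<Rightarrow> 'a set) \<Rightarrow> 'i set \<Rightarrow> nat \<Rightarrow> 'a set set" where
  "partial_transversals C I q =
     {S. S \<subseteq> (\<Union>i\<in>I. C i) \<and> card S = q \<and> (\<forall>i\<in>I. card (S \<inter> C i) \<le> 1)}"

lemma finite_partial_transversals: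
  "finite (\<Union>i\<in>I. C i) \<Longrightarrow> finite (partial_transversals C I q)"
  unfolding partial_transversals_def by (rule finite_subset[of _ "Pow (\<Union>i\<in>I. C i)"]) auto

lemma partial_transversals_0:
  assumes "finite (\<Union>i\<in>I. C i)"
  shows "partial_transversals C I 0 = {{}}"
proof -
  have "S = {}" if "S \<subseteq> (\<Union>i\<in>I. C i)" "card S = 0" for S
    using that assms by (metis card_0_eq finite_subset)
  then show ?thesis by (auto simp: partial_transversals_def)
qed

lemma partial_transversals_empty_Suc: "partial_transversals C {} (Suc k) = {}"
  by (simp add: partial_transversals_def)

lemma partial_transversals_insert_Suc:
  assumes disj: "C x \<inter> (\<Union>i\<in>I. C i) = {}" and fin: "finite (\<Union>i\<in>insert x I. C i)"
  shows "partial_transversals C (insert x I) (Suc k) =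
           partial_transversals C I (Suc k) \<union> (\<lambda>(c, T). insert c T) ` (C x \<times> partial_transversals C I k)"
    (is "?L = ?A \<union> ?B")
proof (intro equalityI subsetI)
  fix S assume S: "S \<in> ?L"
  then have "finite S" using fin by (auto simp: partial_transversals_def intro: finite_subset)
  show "S \<in> ?A \<union> ?B"
  proof (cases "S \<inter> C x = {}")
    case True
    with S have "S \<in> ?A" by (auto simp: partial_transversals_def)
    then show ?thesis ..
  next
    case False
    then obtain c where c: "c \<in> S" "c \<in> C x" by blast
    have "card (S \<inter> C x) \<le> 1" using S by (simp add: partial_transversals_def)
    with c \<open>finite S\<close> have Sx: "S \<inter> C x = {c}" by (auto simp: card_le_Suc0_iff_eq)
    have "S - {c} \<in> partial_transversals C I k"
      unfolding partial_transversals_def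
    proof (intro CollectI conjI ballI)
      show "S - {c} \<subseteq> (\<Union>i\<in>I. C i)"
        using S Sx by (auto simp: partial_transversals_def)
      show "card (S - {c}) = k"
        using S c by (simp add: partial_transversals_def)
      fix i assume "i \<in> I"
      have "card ((S - {c}) \<inter> C i) \<le> card (S \<inter> C i)"
        using \<open>finite S\<close> by (intro card_mono) auto
      also have "\<dots> \<le> 1"
        using S \<open>i \<in> I\<close> by (simp add: partial_transversals_def)
      finally show "card ((S - {c}) \<inter> C i) \<le> 1" .
    qed
    moreover have "S = insert c (S - {c})" using c by blast
    ultimately have "S \<in> ?B" using c by blast
    then show ?thesis ..
  qed
next
  fix S assume "S \<in> ?A \<union> ?B"
  then show "S \<in> ?L"
  proof
    assume "S \<in> ?A"
    moreover from this have "S \<inter> C x = {}" using disj by (auto simp: partial_transversals_def)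
    ultimately show ?thesis by (auto simp: partial_transversals_def)
  next
    assume "S \<in> ?B"
    then obtain c T where c: "c \<in> C x" and T: "T \<in> partial_transversals C I k" and S: "S = insert c T"
      by blast
    have "T \<subseteq> (\<Union>i\<in>I. C i)" using T by (simp add: partial_transversals_def)
    with disj c have "T \<inter> C x = {}" "c \<notin> T" by auto
    moreover have "finite T" using \<open>T \<subseteq> _\<close> fin by (auto intro: finite_subset)
    moreover have "insert c T \<inter> C i = T \<inter> C i" if "i \<in> I" for i
      using disj c that by auto
    ultimately show ?thesis
      using T c unfolding S partial_transversals_def by auto
  qed
qed

lemma card_partial_transversals_insert_Suc:
  assumes disj: "C x \<inter> (\<Union>i\<in>I. C i) = {}" and fin: "finite (\<Union>i\<in>insert x I. C i)"
  shows "card (partial_transversals C (insert x I) (Suc k)) =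
           card (partial_transversals C I (Suc k)) + card (C x) * card (partial_transversals C I k)"
proof -
  let ?A = "partial_transversals C I (Suc k)" and ?B = "partial_transversals C I k"
  let ?ins = "\<lambda>(c, T). insert c T"
  have fins: "finite ?A" "finite ?B" "finite (C x)"
    using fin by (simp_all add: finite_partial_transversals)
  have avoid: "T \<inter> C x = {}" if "T \<in> partial_transversals C I j" for T j
  proof -
    have "T \<subseteq> (\<Union>i\<in>I. C i)" using that by (simp add: partial_transversals_def)
    with disj show ?thesis by blast
  qed
  have meet: "insert c T \<inter> C x = {c}" if "c \<in> C x" "T \<in> ?B" for c T
    using that avoid[of T k] by blast
  have "inj_on ?ins (C x \<times> ?B)"
  proof (rule inj_onI, clarify)
    fix c T c' T' assume c: "c \<in> C x" "T \<in> ?B" "c' \<in> C x" "T' \<in> ?B"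
      and eq: "insert c T = insert c' T'"
    have "{c} = {c'}" using meet[OF c(1,2)] meet[OF c(3,4)] eq by simp
    moreover have "c \<notin> T" "c' \<notin> T'" using avoid[OF c(2)] avoid[OF c(4)] c(1,3) by blast+
    ultimately show "c = c' \<and> T = T'" using eq by (metis insert_ident singleton_inject)
  qed
  moreover have "?A \<inter> ?ins ` (C x \<times> ?B) = {}"
  proof -
    have "S \<notin> ?A" if "S \<in> ?ins ` (C x \<times> ?B)" for S
      using that meet avoid[of S "Suc k"] by fastforce
    then show ?thesis by blast
  qed
  ultimately have "card (?A \<union> ?ins ` (C x \<times> ?B)) = card ?A + card (C x \<times> ?B)"
    using fins by (simp add: card_Un_disjoint card_image)
  then show ?thesis
    by (simp add: partial_transversals_insert_Suc[OF assms] card_cartesian_product)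
qed

lemma card_partial_transversals:
  assumes "finite I" "\<And>i. i \<in> I \<Longrightarrow> finite (C i)" "disjoint_family_on C I"
  shows "card (partial_transversals C I q) = coeff (\<Prod>i\<in>I. [:1, card (C i):]) q"
  using assms
proof (induction I arbitrary: q rule: finite_induct)
  case empty
  then show ?case
    by (cases q) (simp_all add: partial_transversals_0 partial_transversals_empty_Suc)
next
  case (insert x I)
  have fin: "finite (\<Union>i\<in>insert x I. C i)" using insert by simp
  have disj: "C x \<inter> (\<Union>i\<in>I. C i) = {}" "disjoint_family_on C I"
    using insert.prems(2) insert.hyps(2) by (simp_all add: disjoint_family_on_insert)
  show ?case
  proof (cases q)
    case 0
    have "coeff (\<Prod>i\<in>insert x I. [:1, card (C i):]) 0 = 1"
      by (simp add: poly_0_coeff_0[symmetric] poly_prod)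
    then show ?thesis using 0 fin by (simp add: partial_transversals_0)
  next
    case (Suc k)
    then show ?thesis
      using insert disj fin
      by (simp add: card_partial_transversals_insert_Suc)
  qed
qed

section \<open>Diagonals of the board\<close>

definition diagonal :: "nat \<Rightarrow> int \<Rightarrow> (int \<times> int) set" where
  "diagonal n d = {z \<in> board n. fst z - snd z = d}"

lemma semibishop_attacks_iff: "semibishop_attacks z z' \<longleftrightarrow> fst z - snd z = fst z' - snd z'"
  unfolding semibishop_attacks_def by auto

lemma finite_diagonal: "finite (diagonal n d)"
  by (simp add: diagonal_def board_def)

lemma board_eq_Union_diagonal: "board n = (\<Union>d\<in>{1 - int n..int n - 1}. diagonal n d)"
  by (auto simp: diagonal_def board_def)

lemma disjoint_family_diagonal: "disjoint_family_on (diagonal n) D"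
  by (auto simp: disjoint_family_on_def diagonal_def)

lemma card_diagonal: "card (diagonal n d) = nat (int n - \<bar>d\<bar>)"
proof -
  have "diagonal n d = (\<lambda>y. (y + d, y)) ` {max 1 (1 - d)..min (int n) (int n - d)}"
    by (auto simp: diagonal_def board_def image_iff)
  moreover have "inj (\<lambda>y::int. (y + d, y))" by (auto intro: injI)
  ultimately have "card (diagonal n d) = card {max 1 (1 - d)..min (int n) (int n - d)}"
    by (simp add: card_image inj_on_subset)
  then show ?thesis by simp
qed

lemma nonattacking_iff_diagonals:
  assumes "S \<subseteq> board n"
  shows "(\<forall>z\<in>S. \<forall>z'\<in>S. z \<noteq> z' \<longrightarrow> \<not> semibishop_attacks z z') \<longleftrightarrow>
           (\<forall>d\<in>{1 - int n..int n - 1}. card (S \<inter> diagonal n d) \<le> 1)"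
proof -
  have "finite S" using assms by (rule finite_subset) (simp add: board_def)
  have "(\<forall>z\<in>S. \<forall>z'\<in>S. z \<noteq> z' \<longrightarrow> \<not> semibishop_attacks z z') \<longleftrightarrow>
          (\<forall>d. \<forall>z\<in>S \<inter> diagonal n d. \<forall>z'\<in>S \<inter> diagonal n d. z = z')"
    (is "?attack_free \<longleftrightarrow> ?diagonal_free")
  proof
    show "?attack_free \<Longrightarrow> ?diagonal_free"
      by (auto simp: diagonal_def semibishop_attacks_iff)
  next
    assume ?diagonal_free
    show ?attack_free
    proof (intro ballI impI notI)
      fix z z' assume "z \<in> S" "z' \<in> S" "z \<noteq> z'" "semibishop_attacks z z'"
      then have "z \<in> S \<inter> diagonal n (fst z - snd z)" "z' \<in> S \<inter> diagonal n (fst z - snd z)"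
        using assms by (auto simp: diagonal_def semibishop_attacks_iff)
      with \<open>?diagonal_free\<close> \<open>z \<noteq> z'\<close> show False by blast
    qed
  qed
  also have "\<dots> \<longleftrightarrow> (\<forall>d\<in>{1 - int n..int n - 1}. \<forall>z\<in>S \<inter> diagonal n d. \<forall>z'\<in>S \<inter> diagonal n d. z = z')"
  proof -
    have "S \<inter> diagonal n d = {}" if "d \<notin> {1 - int n..int n - 1}" for d
      using assms that by (auto simp: diagonal_def board_def)
    then show ?thesis by (metis IntD2 empty_iff)
  qed
  also have "\<dots> \<longleftrightarrow> (\<forall>d\<in>{1 - int n..int n - 1}. card (S \<inter> diagonal n d) \<le> 1)"
    using \<open>finite S\<close> by (simp add: card_le_Suc0_iff_eq)
  finally show ?thesis .
qed

lemma u_semibishop_eq_card_partial_transversals: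
  "u_semibishop q n = card (partial_transversals (diagonal n) {1 - int n..int n - 1} q)"
proof -
  have "(S \<subseteq> board n \<and> card S = q \<and> (\<forall>z\<in>S. \<forall>z'\<in>S. z \<noteq> z' \<longrightarrow> \<not> semibishop_attacks z z')) \<longleftrightarrow>
        (S \<subseteq> board n \<and> card S = q \<and> (\<forall>d\<in>{1 - int n..int n - 1}. card (S \<inter> diagonal n d) \<le> 1))"
    for S
    using nonattacking_iff_diagonals[of S n] by blast
  then show ?thesis
    unfolding u_semibishop_def partial_transversals_def board_eq_Union_diagonal[symmetric] by simp
qed

lemma stirling_poly_eq_prod_atLeast1: "stirling_poly m = (\<Prod>i\<in>{1..<m}. [:1, i:])"
proof -
  have "stirling_poly m = (\<Prod>i\<in>{0..<m}. [:1, i:])"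
    by (simp add: stirling_poly_def atLeast0LessThan)
  also have "\<dots> = (\<Prod>i\<in>{1..<m}. [:1, i:])"
    by (rule prod.mono_neutral_right) (auto simp: one_pCons Suc_le_eq)
  finally show ?thesis .
qed

text \<open>The diagonals of offsets \<open>d\<close> and \<open>-d\<close> both have \<open>n - |d|\<close> cells, so the lengths are
  \<open>1, \<dots>, n\<close> once and \<open>1, \<dots>, n - 1\<close> once more.\<close>
lemma prod_diagonals:
  "(\<Prod>d\<in>{1 - int n..int n - 1}. [:1, card (diagonal n d):]) = stirling_poly (Suc n) * stirling_poly n"
proof -
  let ?g = "\<lambda>i. [:1, i:] :: nat poly"
  have "(\<Prod>d\<in>{0..int n - 1}. ?g (nat (int n - \<bar>d\<bar>))) = (\<Prod>i\<in>{1..<Suc n}. ?g i)"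
    by (rule prod.reindex_bij_witness[where i = "\<lambda>i. int n - int i" and j = "\<lambda>d. nat (int n - d)"])
      auto
  moreover have "(\<Prod>d\<in>{1 - int n..-1}. ?g (nat (int n - \<bar>d\<bar>))) = (\<Prod>i\<in>{1..<n}. ?g i)"
    by (rule prod.reindex_bij_witness[where i = "\<lambda>i. int i - int n" and j = "\<lambda>d. nat (int n + d)"])
      auto
  moreover have "{1 - int n..int n - 1} = {0..int n - 1} \<union> {1 - int n..-1}" by auto
  ultimately show ?thesis
    by (simp add: card_diagonal prod.union_disjoint stirling_poly_eq_prod_atLeast1)
qed

lemma u_semibishop_eq_convolution:
  "u_semibishop q n = (\<Sum>k\<le>q. coeff (stirling_poly (Suc n)) k * coeff (stirling_poly n) (q - k))"
proof -
  have "u_semibishop q n = coeff (\<Prod>d\<in>{1 - int n..int n - 1}. [:1, card (diagonal n d):]) q"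
    unfolding u_semibishop_eq_card_partial_transversals
    by (rule card_partial_transversals) (simp_all add: finite_diagonal disjoint_family_diagonal)
  also have "\<dots> = coeff (stirling_poly (Suc n) * stirling_poly n) q"
    by (simp only: prod_diagonals)
  finally show ?thesis by (simp add: coeff_mult)
qed

lemma u_semibishop_signed_stirling1:
  "int (u_semibishop q n) =
     (-1) ^ q * (\<Sum>k = 0..q. signed_stirling1 (int n + 1) (int n + 1 - int k) *
                              signed_stirling1 (int n) (int n - (int q - int k)))"
proof -
  have summand: "signed_stirling1 (int n + 1) (int n + 1 - int k) * signed_stirling1 (int n) (int n - (int q - int k))
      = (-1) ^ q * int (coeff (stirling_poly (Suc n)) k * coeff (stirling_poly n) (q - k))"
    if "k \<le> q" for k
  proof -
    have "signed_stirling1 (int n + 1) (int n + 1 - int k) = (-1) ^ k * int (coeff (stirling_poly (Suc n)) k)"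
      using signed_stirling1_eq_coeff_stirling_poly[of "Suc n" k] by (simp add: add.commute)
    moreover have "signed_stirling1 (int n) (int n - (int q - int k)) =
        (-1) ^ (q - k) * int (coeff (stirling_poly n) (q - k))"
      using signed_stirling1_eq_coeff_stirling_poly[of n "q - k"] that by (simp add: of_nat_diff)
    moreover have "(-1::int) ^ k * (-1) ^ (q - k) = (-1) ^ q"
      using that by (simp flip: power_add)
    ultimately show ?thesis by (simp add: algebra_simps)
  qed
  have "(-1) ^ q * (\<Sum>k = 0..q. signed_stirling1 (int n + 1) (int n + 1 - int k) *
                                 signed_stirling1 (int n) (int n - (int q - int k)))
      = (\<Sum>k\<le>q. ((-1) ^ q * (-1) ^ q) * int (coeff (stirling_poly (Suc n)) k * coeff (stirling_poly n) (q - k)))"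
    by (simp add: summand atLeast0AtMost sum_distrib_left mult.assoc)
  also have "\<dots> = int (u_semibishop q n)"
    by (simp add: u_semibishop_eq_convolution of_nat_sum flip: power_add)
  finally show ?thesis ..
qed

lemma poly_fun_u_semibishop: "poly_fun (2 * q) (u_semibishop q)"
proof -
  have "poly_fun (2 * q) (\<lambda>n. coeff (stirling_poly (Suc n)) k * coeff (stirling_poly n) (q - k))"
    if "k \<le> q" for k
  proof -
    have "2 * k + 2 * (q - k) = 2 * q" using that by simp
    with poly_fun_mult[OF poly_fun_shift[OF poly_fun_coeff_stirling_poly] poly_fun_coeff_stirling_poly,
        of k "q - k"]
    show ?thesis by simp
  qed
  then have "poly_fun (2 * q) (\<lambda>n. \<Sum>k\<le>q. coeff (stirling_poly (Suc n)) k * coeff (stirling_poly n) (q - k))"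
    by (intro poly_fun_sum) auto
  then show ?thesis
    by (simp add: u_semibishop_eq_convolution[abs_def])
qed

theorem theorem7p2:
  fixes q :: nat
  assumes "q \<ge> 1"
  shows "(\<forall>n::nat. n \<ge> 1 \<longrightarrow>
            int (u_semibishop q n) =
              (-1) ^ q * (\<Sum>k = 0..q. signed_stirling1 (int n + 1) (int n + 1 - int k) *
                                       signed_stirling1 (int n) (int n - (int q - int k))))
       \<and> (\<exists>p :: rat poly. degree p = 2 * q \<and>
            (\<forall>n::nat. n \<ge> 1 \<longrightarrow> of_nat (u_semibishop q n) = poly p (of_nat n)))"
proof -
  obtain p :: "rat poly" where "degree p = 2 * q" "\<forall>n. of_nat (u_semibishop q n) = poly p (of_nat n)"
    using poly_fun_u_semibishop unfolding poly_fun_def by blast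
  then show ?thesis
    using u_semibishop_signed_stirling1 by blast
qed

end
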